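(* The following semigroups have matricial dimension $2$: (a) the cyclic semigroups $\langle a \rangle = \{0, a, 2a, 3a, \ldots\}$ with $a \geq 2$; (b) the ordinary semigroups $S_b = \{0\} \cup \{b,b+1,b+2,\ldots\}$ with $b \geq 2$; (c) the unions $\langle a \rangle \cup S_b$ with $a,b\geq 2$.
   Context: $\mathbb{N} = \{0,1,2,\ldots\}$. A semigroup means an additive subsemigroup of $\mathbb{N}$ containing $0$; $\langle\cdot\rangle$ denotes the semigroup generated by the indicated elements. $\mathsf{M}_d(X)$ denotes the $d\times d$ matrices with entries in $X$. For $A \in \mathsf{M}_d(\mathbb{Q})$, $\mathcal{S}(A) = \{ n \in \mathbb{N} : A^n \in \mathsf{M}_d(\mathbb{Z})\}$. The matricial dimension $\dim_{\mathrm{mat}} S$ of a semigroup $S$ is the smallest $d$ such that $S = \mathcal{S}(A)$ for some $A \in \mathsf{M}_d(\mathbb{Q})$. *)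

theory Defs
  imports Main "Jordan_Normal_Form.Matrix"
begin

definition int_pow_set :: "rat mat \<Rightarrow> nat set" where
  "int_pow_set A = {n. \<forall>i < dim_row A. \<forall>j < dim_col A. (A ^\<^sub>m n) $$ (i, j) \<in> \<int>}"

definition mat_dim :: "nat set \<Rightarrow> nat" where
  "mat_dim S = (LEAST d. \<exists>A \<in> carrier_mat d d. S = int_pow_set A)"

definition cyclic_sg :: "nat \<Rightarrow> nat set" where
  "cyclic_sg a = {k * a | k. True}"

definition ordinary_sg :: "nat \<Rightarrow> nat set" where
  "ordinary_sg b = {0} \<union> {b..}"

end

theory Submission
  imports Defs "HOL-Number_Theory.Cong" "HOL-Computational_Algebra.Polynomial"
begin

text \<open>
  The n-th power of the upper triangular matrix with diagonal l, u and corner c has diagonal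
  l^n, u^n and corner c (l^n - u^n) / (l - u), so upper triangular 2 x 2 matrices can prescribe
  S(A) through the integrality of a single entry. For the cyclic semigroup take l = u = 1 and
  c = 1/a. Otherwise take l = m, u = m z and c = (m - m z) / m^b: the corner of the n-th power
  is m^n (1 - z^n) / m^b, integral exactly when m^(b - n) divides z^n - 1, a condition that is
  void for n \<ge> b. With m = 2 and z = 0 this gives S_b. For the union take m = a^a - 1, modulo
  which a has order exactly a, and z = a^(m^(b - 1)): lifting the exponent gives
  z^a \<equiv> 1 (mod m^b), while z^n is not \<equiv> 1 (mod m) when a does not divide n.

  No 1 x 1 matrix q works, since q^n \<in> \<int> with n > 0 makes q a rational algebraic integer,
  hence an integer, forcing 1 \<in> S(q).
\<close>

definition upper_tri_mat :: "'a::zero \<Rightarrow> 'a \<Rightarrow> 'a \<Rightarrow> 'a mat" where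
  "upper_tri_mat l c u =
    mat 2 2 (\<lambda>(i, j). if i = 0 then (if j = 0 then l else c) else (if j = 0 then 0 else u))"

primrec upper_tri_corner :: "'a::comm_semiring_1 \<Rightarrow> 'a \<Rightarrow> 'a \<Rightarrow> nat \<Rightarrow> 'a" where
  "upper_tri_corner l c u 0 = 0"
| "upper_tri_corner l c u (Suc n) = l ^ n * c + upper_tri_corner l c u n * u"

lemma upper_tri_mat_carrier [simp]: "upper_tri_mat l c u \<in> carrier_mat 2 2"
  by (simp add: upper_tri_mat_def)

lemma upper_tri_mat_power:
  "upper_tri_mat l c u ^\<^sub>m n = upper_tri_mat (l ^ n) (upper_tri_corner l c u n) (u ^ n)"
proof (induction n)
  case 0
  show ?case
    by (rule eq_matI) (auto simp: upper_tri_mat_def less_2_cases_iff)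
next
  case (Suc n)
  show ?case
    by (simp add: Suc, rule eq_matI)
       (auto simp: upper_tri_mat_def less_2_cases_iff scalar_prod_def numeral_2_eq_2 algebra_simps)
qed

lemma int_pow_set_upper_tri_mat:
  "int_pow_set (upper_tri_mat l c u)
    = {n. l ^ n \<in> \<int> \<and> upper_tri_corner l c u n \<in> \<int> \<and> u ^ n \<in> \<int>}"
  unfolding int_pow_set_def upper_tri_mat_power by (auto simp: upper_tri_mat_def less_2_cases_iff)

lemma upper_tri_corner_unipotent: "upper_tri_corner 1 c 1 n = of_nat n * c"
  by (induction n) (simp_all add: algebra_simps)

lemma upper_tri_corner_geometric:
  fixes l u d :: "'a::field"
  shows "upper_tri_corner l ((l - u) / d) u n = (l ^ n - u ^ n) / d"
proof (induction n)
  case (Suc n)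
  have "upper_tri_corner l ((l - u) / d) u (Suc n) = (l ^ n * (l - u) + (l ^ n - u ^ n) * u) / d"
    by (simp add: Suc add_divide_distrib)
  also have "\<dots> = (l ^ Suc n - u ^ Suc n) / d"
    by (simp add: algebra_simps)
  finally show ?case .
qed simp

lemma power_in_Ints_imp_Ints:
  fixes x :: "'a::field_char_0"
  assumes "x \<in> \<rat>" "x ^ n \<in> \<int>" "n > 0"
  shows "x \<in> \<int>"
proof -
  have "algebraic_int (x ^ n)"
    using assms(2) by (rule int_imp_algebraic_int)
  then have "algebraic_int x"
    by (rule algebraic_int_root[where p = "monom 1 n"])
      (use assms(3) in \<open>simp_all add: poly_monom coeff_monom degree_monom_eq\<close>)
  then show ?thesis
    using assms(1) by (rule rational_algebraic_int_is_int)
qed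

lemma int_pow_set_1x1:
  assumes "A \<in> carrier_mat 1 1"
  shows "int_pow_set A = {n. (A $$ (0, 0)) ^ n \<in> \<int>}"
proof -
  have "(A ^\<^sub>m n) $$ (0, 0) = (A $$ (0, 0)) ^ n" for n
  proof (induction n)
    case (Suc n)
    have "A ^\<^sub>m n \<in> carrier_mat 1 1"
      using assms by simp
    with assms Suc show ?case
      by (simp add: scalar_prod_def power_commutes)
  qed (use assms in simp)
  with assms show ?thesis
    by (auto simp: int_pow_set_def)
qed

lemma mat_dim_eq_2I:
  assumes A: "A \<in> carrier_mat 2 2" "S = int_pow_set A"
    and S: "1 \<notin> S" "n \<in> S" "n > 0"
  shows "mat_dim S = 2"
  unfolding mat_dim_def
proof (rule Least_equality)
  show "\<exists>A \<in> carrier_mat 2 2. S = int_pow_set A"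
    using A by blast
next
  fix d
  assume "\<exists>B \<in> carrier_mat d d. S = int_pow_set B"
  then obtain B where B: "B \<in> carrier_mat d d" "S = int_pow_set B"
    by blast
  have "d \<noteq> 0"
  proof
    assume "d = 0"
    then have "1 \<in> int_pow_set B"
      using B(1) by (simp add: int_pow_set_def)
    with B(2) S(1) show False
      by simp
  qed
  moreover have "d \<noteq> 1"
  proof
    assume "d = 1"
    then have S_eq: "S = {n. (B $$ (0, 0)) ^ n \<in> \<int>}"
      using B by (simp add: int_pow_set_1x1)
    have "B $$ (0, 0) \<in> \<rat>"
      by (simp add: Rats_def)
    then have "B $$ (0, 0) \<in> \<int>"
      using S(2,3) S_eq by (auto intro: power_in_Ints_imp_Ints[of _ n])
    with S(1) S_eq show False
      by simp
  qed
  ultimately show "2 \<le> d"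
    by linarith
qed

definition geom_mat :: "int \<Rightarrow> int \<Rightarrow> nat \<Rightarrow> rat mat" where
  "geom_mat m z b =
    upper_tri_mat (of_int m) ((of_int m - of_int (m * z)) / of_int (m ^ b)) (of_int (m * z))"

lemma geom_mat_carrier [simp]: "geom_mat m z b \<in> carrier_mat 2 2"
  by (simp add: geom_mat_def)

lemma power_dvd_power_mult_iff:
  fixes m :: "'a::idom"
  assumes "m \<noteq> 0"
  shows "m ^ b dvd m ^ n * x \<longleftrightarrow> m ^ (b - n) dvd x"
proof (cases "b \<le> n")
  case True
  then have "m ^ b dvd m ^ n * x"
    by (simp add: le_imp_power_dvd dvd_mult2)
  with True show ?thesis
    by simp
next
  case False
  then have "m ^ b = m ^ n * m ^ (b - n)"
    by (simp flip: power_add)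
  with assms show ?thesis
    by simp
qed

text \<open>Note the truncated subtraction: for n \<ge> b the modulus is 1.\<close>
lemma int_pow_set_geom_mat:
  assumes "m \<noteq> 0"
  shows "int_pow_set (geom_mat m z b) = {n. m ^ (b - n) dvd z ^ n - 1}"
proof -
  have corner: "upper_tri_corner (of_int m) ((of_int m - of_int (m * z)) / of_int (m ^ b))
      (of_int (m * z)) n = (of_int (m ^ n * (1 - z ^ n)) / of_int (m ^ b) :: rat)" for n
    by (simp add: upper_tri_corner_geometric power_mult_distrib algebra_simps)
  have "m ^ b dvd m ^ n * (1 - z ^ n) \<longleftrightarrow> m ^ (b - n) dvd z ^ n - 1" for n
    using assms by (simp add: power_dvd_power_mult_iff dvd_diff_commute)
  with assms show ?thesis
    unfolding geom_mat_def int_pow_set_upper_tri_mat corner of_int_div_of_int_in_Ints_iff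
    by simp
qed

lemma cong_pow_1_lift:
  fixes x :: int and m :: nat
  assumes "[x = 1] (mod int m ^ Suc k)"
  shows "[x ^ m = 1] (mod int m ^ Suc (Suc k))"
proof -
  \<comment> \<open>x^m - 1 = (x - 1) (1 + x + ... + x^(m-1)), and the second factor is \<equiv> m (mod m).\<close>
  have "[x = 1] (mod int m)"
    using assms by (rule cong_dvd_modulus) simp
  then have "[(\<Sum>i<m. x ^ i) = (\<Sum>i<m. 1)] (mod int m)"
    by (intro cong_sum) (metis cong_pow power_one)
  then have "int m dvd (\<Sum>i<m. x ^ i)"
    by (simp add: cong_dvd_iff)
  moreover have "int m ^ Suc k dvd x - 1"
    using assms by (simp add: cong_iff_dvd_diff)
  ultimately have "int m ^ Suc k * int m dvd (x - 1) * (\<Sum>i<m. x ^ i)"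
    by (simp add: mult_dvd_mono)
  then show ?thesis
    by (simp add: cong_iff_dvd_diff power_diff_1_eq mult.commute)
qed

lemma cong_pow_power_1_lift:
  fixes x :: int and m :: nat
  assumes "[x = 1] (mod int m)"
  shows "[x ^ (m ^ k) = 1] (mod int m ^ Suc k)"
proof (induction k)
  case (Suc k)
  have "x ^ (m ^ Suc k) = (x ^ (m ^ k)) ^ m"
    by (simp only: power_Suc2 power_mult)
  with cong_pow_1_lift[OF Suc] show ?case
    by simp
qed (use assms in simp)

lemma power_pred_less_power_self_diff_1:
  fixes a :: nat
  assumes "2 \<le> a"
  shows "a ^ (a - 1) < a ^ a - 1"
proof -
  have "a ^ 1 \<le> a ^ (a - 1)"
    using assms by (intro power_increasing) auto
  then have "2 * a ^ (a - 1) \<le> a * a ^ (a - 1)" "2 \<le> a ^ (a - 1)"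
    using assms by (simp_all add: mult_right_mono)
  moreover have "a ^ a = a * a ^ (a - 1)"
    using assms by (simp flip: power_Suc)
  ultimately show ?thesis
    by linarith
qed

lemma power_mod_power_self_diff_1:
  fixes a :: nat
  assumes "2 \<le> a"
  shows "a ^ j mod (a ^ a - 1) = a ^ (j mod a)"
proof -
  have "a ^ (j mod a) \<le> a ^ (a - 1)"
    using assms by (intro power_increasing) (auto simp: less_Suc_eq_le[symmetric])
  with power_pred_less_power_self_diff_1[OF assms]
  have small: "a ^ (j mod a) < a ^ a - 1"
    by linarith
  have "[a ^ a = 1] (mod a ^ a - 1)"
    using small by (simp add: cong_def le_mod_geq)
  then have "[(a ^ a) ^ (j div a) * a ^ (j mod a) = 1 ^ (j div a) * a ^ (j mod a)] (mod a ^ a - 1)"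
    by (intro cong_mult cong_pow cong_refl)
  moreover have "(a ^ a) ^ (j div a) * a ^ (j mod a) = a ^ j"
    by (metis div_mult_mod_eq mult.commute power_add power_mult)
  ultimately show ?thesis
    using small by (simp add: cong_def)
qed

lemma cong_power_self_diff_1_iff:
  fixes a :: nat
  assumes "2 \<le> a"
  shows "[a ^ j = 1] (mod a ^ a - 1) \<longleftrightarrow> a dvd j"
proof -
  have "1 \<le> a ^ (a - 1)"
    using assms by simp
  with power_pred_less_power_self_diff_1[OF assms] have "1 mod (a ^ a - 1) = 1"
    by simp
  then show ?thesis
    unfolding cong_def power_mod_power_self_diff_1[OF assms]
    using assms by (simp add: dvd_eq_mod_eq_0)
qed

lemma cyclic_sg_eq: "cyclic_sg a = {n. a dvd n}"
  by (auto simp: cyclic_sg_def)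

lemma int_pow_set_cyclic_witness:
  assumes "a > 0"
  shows "int_pow_set (upper_tri_mat 1 (1 / of_nat a) 1) = cyclic_sg a"
proof -
  have "(of_nat n * (1 / of_nat a) :: rat) \<in> \<int> \<longleftrightarrow> a dvd n" for n
    using assms of_int_div_of_int_in_Ints_iff[of "int n" "int a", where 'a = rat] by simp
  then show ?thesis
    by (simp add: int_pow_set_upper_tri_mat upper_tri_corner_unipotent cyclic_sg_eq)
qed

lemma int_pow_set_ordinary_witness: "int_pow_set (geom_mat 2 0 b) = ordinary_sg b"
proof -
  have "(2::int) ^ (b - n) dvd 0 ^ n - 1 \<longleftrightarrow> n = 0 \<or> b \<le> n" for n
  proof (cases "n = 0")
    case False
    have unit: "(2::int) ^ k dvd -1 \<longleftrightarrow> k = 0" for k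
      by (cases k) (simp_all, metis dvd_triv_left odd_one)
    have "(0::int) ^ n - 1 = -1"
      using False by simp
    then show ?thesis
      by (simp only: unit) simp
  qed simp
  then show ?thesis
    by (auto simp: int_pow_set_geom_mat ordinary_sg_def)
qed

lemma cong_power_self_lift:
  fixes a :: nat
  assumes "1 \<le> a"
  shows "[(int a ^ ((a ^ a - 1) ^ k)) ^ a = 1] (mod int (a ^ a - 1) ^ Suc k)"
proof -
  have "[int a ^ a = 1] (mod int (a ^ a - 1))"
    using assms by (simp add: of_nat_diff cong_iff_dvd_diff)
  then have "[(int a ^ a) ^ ((a ^ a - 1) ^ k) = 1] (mod int (a ^ a - 1) ^ Suc k)"
    by (rule cong_pow_power_1_lift)
  then show ?thesis
    by (simp only: power_mult[symmetric] mult.commute)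
qed

lemma cong_power_self_power_iff:
  fixes a :: nat
  assumes "2 \<le> a"
  shows "[(int a ^ ((a ^ a - 1) ^ k)) ^ n = 1] (mod int (a ^ a - 1)) \<longleftrightarrow> a dvd n"
proof -
  have "coprime (a ^ a - 1) (a ^ a)"
    using assms by (intro coprime_diff_one_left_nat) simp
  then have "coprime a (a ^ a - 1)"
    using assms by (simp add: coprime_commute)
  then have "a dvd (a ^ a - 1) ^ k * n \<longleftrightarrow> a dvd n"
    by (simp add: coprime_dvd_mult_right_iff)
  moreover have "[(int a ^ ((a ^ a - 1) ^ k)) ^ n = 1] (mod int (a ^ a - 1))
      \<longleftrightarrow> [a ^ ((a ^ a - 1) ^ k * n) = 1] (mod a ^ a - 1)"
    using cong_int_iff[of "a ^ ((a ^ a - 1) ^ k * n)" 1 "a ^ a - 1"] by (simp add: power_mult)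
  ultimately show ?thesis
    unfolding cong_power_self_diff_1_iff[OF assms] by simp
qed

lemma int_pow_set_union_witness:
  assumes "2 \<le> a"
  shows "int_pow_set (geom_mat (int (a ^ a - 1)) (int a ^ ((a ^ a - 1) ^ (b - 1))) b)
    = cyclic_sg a \<union> ordinary_sg b"
proof -
  define M where "M = a ^ a - 1"
  define z where "z = int a ^ (M ^ (b - 1))"
  have "0 < M"
    using power_pred_less_power_self_diff_1[OF assms] by (simp add: M_def)
  then have "int M \<noteq> 0"
    by simp
  have "int M ^ (b - n) dvd z ^ n - 1 \<longleftrightarrow> a dvd n \<or> b \<le> n" for n
  proof (cases "b \<le> n")
    case False
    then have dvd: "int M ^ (b - n) dvd int M ^ b" "int M dvd int M ^ (b - n)"
      by (simp_all add: le_imp_power_dvd)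
    have za: "[z ^ a = 1] (mod int M ^ b)"
      using cong_power_self_lift[of a "b - 1"] assms False by (simp add: M_def z_def)
    have "[z ^ n = 1] (mod int M ^ b)" if "a dvd n"
    proof -
      from that obtain k where "n = a * k"
        by blast
      from za have "[(z ^ a) ^ k = 1 ^ k] (mod int M ^ b)"
        by (rule cong_pow)
      with \<open>n = a * k\<close> show ?thesis
        by (simp add: power_mult)
    qed
    moreover have "[z ^ n = 1] (mod int M) \<longleftrightarrow> a dvd n"
      using cong_power_self_power_iff[OF assms] by (simp add: M_def z_def)
    ultimately show ?thesis
      using False dvd by (meson cong_iff_dvd_diff dvd_trans)
  qed simp
  then show ?thesis
    unfolding M_def[symmetric] z_def[symmetric] int_pow_set_geom_mat[OF \<open>int M \<noteq> 0\<close>]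
    by (auto simp: cyclic_sg_eq ordinary_sg_def)
qed

lemma mat_dim_cyclic_sg:
  assumes "2 \<le> a"
  shows "mat_dim (cyclic_sg a) = 2"
proof (rule mat_dim_eq_2I[OF upper_tri_mat_carrier, where n = a])
  show "cyclic_sg a = int_pow_set (upper_tri_mat 1 (1 / of_nat a) 1)"
    using assms by (simp add: int_pow_set_cyclic_witness)
qed (use assms in \<open>auto simp: cyclic_sg_eq\<close>)

lemma mat_dim_ordinary_sg:
  assumes "2 \<le> b"
  shows "mat_dim (ordinary_sg b) = 2"
proof (rule mat_dim_eq_2I[OF geom_mat_carrier, where n = b])
  show "ordinary_sg b = int_pow_set (geom_mat 2 0 b)"
    by (simp add: int_pow_set_ordinary_witness)
qed (use assms in \<open>auto simp: ordinary_sg_def\<close>)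

lemma mat_dim_cyclic_sg_Un_ordinary_sg:
  assumes "2 \<le> a" "2 \<le> b"
  shows "mat_dim (cyclic_sg a \<union> ordinary_sg b) = 2"
proof (rule mat_dim_eq_2I[OF geom_mat_carrier, where n = a])
  show "cyclic_sg a \<union> ordinary_sg b
      = int_pow_set (geom_mat (int (a ^ a - 1)) (int a ^ ((a ^ a - 1) ^ (b - 1))) b)"
    by (rule int_pow_set_union_witness[OF assms(1), symmetric])
qed (use assms in \<open>auto simp: cyclic_sg_eq ordinary_sg_def\<close>)

theorem theorem2p8:
  shows "(\<forall>a::nat. a \<ge> 2 \<longrightarrow> mat_dim (cyclic_sg a) = 2)
    \<and> (\<forall>b::nat. b \<ge> 2 \<longrightarrow> mat_dim (ordinary_sg b) = 2)
    \<and> (\<forall>a b::nat. a \<ge> 2 \<longrightarrow> b \<ge> 2 \<longrightarrow> mat_dim (cyclic_sg a \<union> ordinary_sg b) = 2)"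
  using mat_dim_cyclic_sg mat_dim_ordinary_sg mat_dim_cyclic_sg_Un_ordinary_sg by blast

end
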